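(* Let $H$ be a weak Hopf algebra, $\pi\colon H\to A$ a partial representation, $w\in H_s$ and $z\in H_t$. Then for all $h\in H$: (1) $\pi(w)\pi(h)=\pi(wh)$; (2) $\pi(h)\pi(z)=\pi(hz)$; (3) $\pi(z)\pi(h)=\pi(zh)$; (4) $\pi(h)\pi(w)=\pi(hw)$.
   Context: All algebras are associative and unital over a field $\Bbbk$; Sweedler notation $\Delta(h)=h_1\otimes h_2$, $\Delta(1_H)=1_1\otimes1_2$. A weak Hopf algebra is $(H,m,u,\Delta,\varepsilon,S)$ with $H$ an algebra, $(H,\Delta,\varepsilon)$ a coalgebra, and for all $g,h,k$: $\Delta(kh)=\Delta(k)\Delta(h)$; $\varepsilon(kh_1)\varepsilon(h_2g)=\varepsilon(khg)=\varepsilon(kh_2)\varepsilon(h_1g)$; $(1\otimes\Delta(1))(\Delta(1)\otimes1)=\Delta^2(1)=(\Delta(1)\otimes1)(1\otimes\Delta(1))$; $h_1S(h_2)=\varepsilon_t(h)$; $S(h_1)h_2=\varepsilon_s(h)$; $S(h)=S(h_1)h_2S(h_3)$, where $\varepsilon_t(h)=\varepsilon(1_1h)1_2$, $\varepsilon_s(h)=1_1\varepsilon(h1_2)$; $H_t=\varepsilon_t(H)$, $H_s=\varepsilon_s(H)$. A partial representation of $H$ in $A$ is a linear $\pi\colon H\to A$ with, for all $h,k$: (PR1) $\pi(1_H)=1_A$; (PR2) $\pi(h)\pi(k_1)\pi(S(k_2))=\pi(hk_1)\pi(S(k_2))$; (PR3) $\pi(h)\pi(S(k_1))\pi(k_2)=\pi(hS(k_1))\pi(k_2)$;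 (PR4) $\pi(h_1)\pi(S(h_2))\pi(k)=\pi(h_1)\pi(S(h_2)k)$; (PR5) $\pi(S(h_1))\pi(h_2)\pi(k)=\pi(S(h_1))\pi(h_2k)$; (PR6) $\pi(h)=\pi(h_1)\pi(S(h_2))\pi(h_3)$. *)

theory Defs
  imports Complex_Main
begin

text \<open>
  Since HOL has no tensor products, an element of H (x) H is represented by a finite
  list of pairs [(a1,b1),...,(an,bn)] standing for the sum of the ai (x) bi, and
  similarly for H (x) H (x) H with triples.  Two such lists denote the same tensor iff
  they cannot be separated by products of linear functionals (true over a field).
  The comultiplication is a map Delta giving a representing list for each h, so that
  Sweedler sums h1 (x) h2 are sums over the list Delta h.
\<close>

definition k_algebra :: "('k::field \<Rightarrow> 'h::ring_1 \<Rightarrow> 'h) \<Rightarrow> bool" where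
  "k_algebra sc \<longleftrightarrow> Vector_Spaces.vector_space sc \<and>
     (\<forall>c x y. sc c (x * y) = sc c x * y \<and> sc c (x * y) = x * sc c y)"

definition teq2 :: "('k::field \<Rightarrow> 'h::ring_1 \<Rightarrow> 'h) \<Rightarrow> ('h \<times> 'h) list \<Rightarrow> ('h \<times> 'h) list \<Rightarrow> bool" where
  "teq2 sc T U \<longleftrightarrow>
     (\<forall>f g. Vector_Spaces.linear sc (*) f \<and> Vector_Spaces.linear sc (*) g \<longrightarrow>
        (\<Sum>(a,b)\<leftarrow>T. f a * g b) = (\<Sum>(a,b)\<leftarrow>U. f a * g b))"

definition teq3 :: "('k::field \<Rightarrow> 'h::ring_1 \<Rightarrow> 'h) \<Rightarrow> ('h \<times> 'h \<times> 'h) list \<Rightarrow> ('h \<times> 'h \<times> 'h) list \<Rightarrow> bool" where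
  "teq3 sc T U \<longleftrightarrow>
     (\<forall>f g l. Vector_Spaces.linear sc (*) f \<and> Vector_Spaces.linear sc (*) g \<and> Vector_Spaces.linear sc (*) l \<longrightarrow>
        (\<Sum>(a,b,c)\<leftarrow>T. f a * g b * l c) = (\<Sum>(a,b,c)\<leftarrow>U. f a * g b * l c))"

text \<open>(Delta (x) id) Delta h  and  (id (x) Delta) Delta h, i.e. h1 (x) h2 (x) h3.\<close>
definition cop2L :: "('h \<Rightarrow> ('h \<times> 'h) list) \<Rightarrow> 'h \<Rightarrow> ('h \<times> 'h \<times> 'h) list" where
  "cop2L D h = concat (map (\<lambda>(a,b). map (\<lambda>(x,y). (x,y,b)) (D a)) (D h))"

definition cop2R :: "('h \<Rightarrow> ('h \<times> 'h) list) \<Rightarrow> 'h \<Rightarrow> ('h \<times> 'h \<times> 'h) list" where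
  "cop2R D h = concat (map (\<lambda>(a,b). map (\<lambda>(x,y). (a,x,y)) (D b)) (D h))"

definition tmul2 :: "('h::ring_1 \<times> 'h) list \<Rightarrow> ('h \<times> 'h) list \<Rightarrow> ('h \<times> 'h) list" where
  "tmul2 T U = concat (map (\<lambda>(a,b). map (\<lambda>(c,d). (a * c, b * d)) U) T)"

definition tmul3 :: "('h::ring_1 \<times> 'h \<times> 'h) list \<Rightarrow> ('h \<times> 'h \<times> 'h) list \<Rightarrow> ('h \<times> 'h \<times> 'h) list" where
  "tmul3 T U = concat (map (\<lambda>(a,b,c). map (\<lambda>(x,y,z). (a * x, b * y, c * z)) U) T)"

definition eps_t :: "('k::field \<Rightarrow> 'h::ring_1 \<Rightarrow> 'h) \<Rightarrow> ('h \<Rightarrow> ('h \<times> 'h) list) \<Rightarrow> ('h \<Rightarrow> 'k) \<Rightarrow> 'h \<Rightarrow> 'h" where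
  "eps_t sc D eps h = (\<Sum>(a,b)\<leftarrow>D 1. sc (eps (a * h)) b)"

definition eps_s :: "('k::field \<Rightarrow> 'h::ring_1 \<Rightarrow> 'h) \<Rightarrow> ('h \<Rightarrow> ('h \<times> 'h) list) \<Rightarrow> ('h \<Rightarrow> 'k) \<Rightarrow> 'h \<Rightarrow> 'h" where
  "eps_s sc D eps h = (\<Sum>(a,b)\<leftarrow>D 1. sc (eps (h * b)) a)"

definition weak_hopf_algebra ::
  "('k::field \<Rightarrow> 'h::ring_1 \<Rightarrow> 'h) \<Rightarrow> ('h \<Rightarrow> ('h \<times> 'h) list) \<Rightarrow> ('h \<Rightarrow> 'k) \<Rightarrow> ('h \<Rightarrow> 'h) \<Rightarrow> bool" where
  "weak_hopf_algebra sc D eps S \<longleftrightarrow>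
     k_algebra sc
   \<comment> \<open>coalgebra: Delta and epsilon linear, coassociative, counital\<close>
   \<and> (\<forall>x y. teq2 sc (D (x + y)) (D x @ D y))
   \<and> (\<forall>c x. teq2 sc (D (sc c x)) (map (\<lambda>(a,b). (sc c a, b)) (D x)))
   \<and> Vector_Spaces.linear sc (*) eps
   \<and> (\<forall>h. teq3 sc (cop2L D h) (cop2R D h))
   \<and> (\<forall>h. (\<Sum>(a,b)\<leftarrow>D h. sc (eps a) b) = h)
   \<and> (\<forall>h. (\<Sum>(a,b)\<leftarrow>D h. sc (eps b) a) = h)
   \<comment> \<open>Delta multiplicative\<close>
   \<and> (\<forall>k h. teq2 sc (D (k * h)) (tmul2 (D k) (D h)))
   \<comment> \<open>weak multiplicativity of the counit\<close>
   \<and> (\<forall>k h g. (\<Sum>(a,b)\<leftarrow>D h. eps (k * a) * eps (b * g)) = eps (k * h * g))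
   \<and> (\<forall>k h g. (\<Sum>(a,b)\<leftarrow>D h. eps (k * b) * eps (a * g)) = eps (k * h * g))
   \<comment> \<open>weak comultiplicativity of the unit\<close>
   \<and> teq3 sc (tmul3 (map (\<lambda>(x,y). (1,x,y)) (D 1)) (map (\<lambda>(x,y). (x,y,1)) (D 1))) (cop2L D 1)
   \<and> teq3 sc (cop2L D 1) (tmul3 (map (\<lambda>(x,y). (x,y,1)) (D 1)) (map (\<lambda>(x,y). (1,x,y)) (D 1)))
   \<comment> \<open>antipode\<close>
   \<and> Vector_Spaces.linear sc sc S
   \<and> (\<forall>h. (\<Sum>(a,b)\<leftarrow>D h. a * S b) = eps_t sc D eps h)
   \<and> (\<forall>h. (\<Sum>(a,b)\<leftarrow>D h. S a * b) = eps_s sc D eps h)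
   \<and> (\<forall>h. S h = (\<Sum>(a,b,c)\<leftarrow>cop2L D h. S a * b * S c))"

definition partial_rep ::
  "('k::field \<Rightarrow> 'h::ring_1 \<Rightarrow> 'h) \<Rightarrow> ('h \<Rightarrow> ('h \<times> 'h) list) \<Rightarrow> ('h \<Rightarrow> 'h)
   \<Rightarrow> ('k \<Rightarrow> 'a::ring_1 \<Rightarrow> 'a) \<Rightarrow> ('h \<Rightarrow> 'a) \<Rightarrow> bool" where
  "partial_rep sc D S scA \<pi> \<longleftrightarrow>
     Vector_Spaces.linear sc scA \<pi>
   \<and> \<pi> 1 = 1
   \<and> (\<forall>h k. \<pi> h * (\<Sum>(a,b)\<leftarrow>D k. \<pi> a * \<pi> (S b)) = (\<Sum>(a,b)\<leftarrow>D k. \<pi> (h * a) * \<pi> (S b)))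
   \<and> (\<forall>h k. \<pi> h * (\<Sum>(a,b)\<leftarrow>D k. \<pi> (S a) * \<pi> b) = (\<Sum>(a,b)\<leftarrow>D k. \<pi> (h * S a) * \<pi> b))
   \<and> (\<forall>h k. (\<Sum>(a,b)\<leftarrow>D h. \<pi> a * \<pi> (S b)) * \<pi> k = (\<Sum>(a,b)\<leftarrow>D h. \<pi> a * \<pi> (S b * k)))
   \<and> (\<forall>h k. (\<Sum>(a,b)\<leftarrow>D h. \<pi> (S a) * \<pi> b) * \<pi> k = (\<Sum>(a,b)\<leftarrow>D h. \<pi> (S a) * \<pi> (b * k)))
   \<and> (\<forall>h. \<pi> h = (\<Sum>(a,b,c)\<leftarrow>cop2L D h. \<pi> a * \<pi> (S b) * \<pi> c))"

end

theory Submission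
  imports Defs
begin

text \<open>
  Tensor identities are given only through their pairings with products of linear functionals.
  Expanding in coordinates of a finite-dimensional subspace turns each of them into an equality
  of sums for every bilinear (trilinear) map, which is the form in which they are used.

  From the axioms, \<open>\<Delta>(\<epsilon>\<^sub>t(g) h) = \<epsilon>\<^sub>t(g) h\<^sub>1 \<otimes> h\<^sub>2\<close> and
  \<open>\<Delta>(h \<epsilon>\<^sub>s(g)) = h\<^sub>1 \<otimes> h\<^sub>2 \<epsilon>\<^sub>s(g)\<close>, similarly for the iterated coproduct.
  Writing \<open>\<pi>(h) = \<pi>(h\<^sub>1)\<pi>(S h\<^sub>2)\<pi>(h\<^sub>3)\<close> by (PR6), axiom (PR2) absorbs \<open>\<pi>(z)\<close>
  into the first factor, giving \<open>\<pi>(z)\<pi>(h) = \<pi>(zh)\<close>; symmetrically (PR5) gives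
  \<open>\<pi>(h)\<pi>(w) = \<pi>(hw)\<close>. For the other two identities one shows
  \<open>\<pi>(w) = \<pi>(S w\<^sub>1)\<pi>(w\<^sub>2)\<close> and \<open>\<pi>(z) = \<pi>(z\<^sub>1)\<pi>(S z\<^sub>2)\<close>, using
  \<open>\<Delta>(w) = 1\<^sub>1 \<otimes> 1\<^sub>2 w\<close>, \<open>\<Delta>(z) = z 1\<^sub>1 \<otimes> 1\<^sub>2\<close>,
  \<open>S(\<epsilon>\<^sub>s(g)) = \<epsilon>\<^sub>t(\<epsilon>\<^sub>s(g))\<close> and \<open>S(\<epsilon>\<^sub>t(g)) = \<epsilon>\<^sub>s(\<epsilon>\<^sub>t(g))\<close>;
  then (PR5), resp. (PR2), moves \<open>\<pi>(h)\<close> inside.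
\<close>

section \<open>Linear maps and finite sums\<close>

lemmas vs_linear_add = module_hom.add[OF module_hom_linearI]
  and vs_linear_scale = module_hom.scale[OF module_hom_linearI]
  and vs_linear_zero = module_hom.zero[OF module_hom_linearI]
  and vs_linear_sum = module_hom.sum[OF module_hom_linearI]

lemma vs_linear_sum_list:
  "Vector_Spaces.linear s1 s2 f \<Longrightarrow> f (\<Sum>(a,b)\<leftarrow>L. g a b) = (\<Sum>(a,b)\<leftarrow>L. f (g a b))"
  by (induction L) (auto simp: vs_linear_add vs_linear_zero)

lemma vs_linearI:
  assumes "Vector_Spaces.vector_space s1" "Vector_Spaces.vector_space s2"
    and "\<And>x y. f (x + y) = f x + f y" "\<And>c x. f (s1 c x) = s2 c (f x)"
  shows "Vector_Spaces.linear s1 s2 f"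
  using assms unfolding Vector_Spaces.linear_iff by blast

lemma vs_linear_vector_space_target:
  "Vector_Spaces.linear s1 s2 f \<Longrightarrow> Vector_Spaces.vector_space s2"
  unfolding Vector_Spaces.linear_iff by blast

lemma sum_list_case_prod_mult_left:
  "(\<Sum>(a,b)\<leftarrow>L. c * f a b) = (c::'a::semiring_0) * (\<Sum>(a,b)\<leftarrow>L. f a b)"
  by (induction L) (auto simp: distrib_left)

lemma sum_list_case_prod_mult_right:
  "(\<Sum>(a,b)\<leftarrow>L. f a b * c) = (\<Sum>(a,b)\<leftarrow>L. f a b) * (c::'a::semiring_0)"
  by (induction L) (auto simp: distrib_right)

lemma sum_list_case_prod_add:
  "(\<Sum>(a,b)\<leftarrow>L. f a b + g a b) = (\<Sum>(a,b)\<leftarrow>L. f a b) + (\<Sum>(a,b)\<leftarrow>L. (g a b :: 'a::comm_monoid_add))"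
  by (induction L) (auto simp: algebra_simps)

lemma sum_list_case_prod_swap:
  "(\<Sum>(p,q)\<leftarrow>L. \<Sum>(a,b)\<leftarrow>M. g p q a b) = (\<Sum>(a,b)\<leftarrow>M. \<Sum>(p,q)\<leftarrow>L. (g p q a b :: 'a::comm_monoid_add))"
  by (induction L) (auto simp: sum_list_case_prod_add)

lemma sum_list_case_prod_cong:
  "(\<And>a b. (a, b) \<in> set L \<Longrightarrow> f a b = g a b) \<Longrightarrow> (\<Sum>(a,b)\<leftarrow>L. f a b) = (\<Sum>(a,b)\<leftarrow>L. g a b)"
  by (induction L) auto

lemma sum_list_concat: "sum_list (concat xss) = sum_list (map sum_list xss)"
  by (induction xss) auto

lemma sum_cop2L: "(\<Sum>(a,b,c)\<leftarrow>cop2L D h. F a b c) = (\<Sum>(u,c)\<leftarrow>D h. \<Sum>(a,b)\<leftarrow>D u. F a b c)"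
  by (simp add: cop2L_def map_concat sum_list_concat o_def split_def)

lemma sum_cop2R: "(\<Sum>(a,b,c)\<leftarrow>cop2R D h. F a b c) = (\<Sum>(a,u)\<leftarrow>D h. \<Sum>(b,c)\<leftarrow>D u. F a b c)"
  by (simp add: cop2R_def map_concat sum_list_concat o_def split_def)

lemma sum_tmul2: "(\<Sum>(a,b)\<leftarrow>tmul2 T U. K a b) = (\<Sum>(x,y)\<leftarrow>T. \<Sum>(x',y')\<leftarrow>U. K (x * x') (y * y'))"
  by (simp add: tmul2_def map_concat sum_list_concat o_def split_def)

lemma sum_tmul3:
  "(\<Sum>(a,b,c)\<leftarrow>tmul3 T U. F a b c) = (\<Sum>(x,y,z)\<leftarrow>T. \<Sum>(x',y',z')\<leftarrow>U. F (x * x') (y * y') (z * z'))"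
  by (simp add: tmul3_def map_concat sum_list_concat o_def split_def)

lemma sum_list_map_apfst:
  "(\<Sum>(a,b)\<leftarrow>map (\<lambda>(a,b). (f a, b)) L. K a b) = (\<Sum>(a,b)\<leftarrow>L. K (f a) b)"
  by (induction L) auto

lemma sum_list_map_unit_component:
  "(\<Sum>(a,b,c)\<leftarrow>map (Pair 1) L. F a b c) = (\<Sum>(x,y)\<leftarrow>L. F 1 x y)"
  "(\<Sum>(a,b,c)\<leftarrow>map (\<lambda>(x,y). (x,y,1)) L. F a b c) = (\<Sum>(x,y)\<leftarrow>L. F x y 1)"
  by (induction L) auto

lemma (in vector_space) scale_sum_list_case_prod:
  "(\<Sum>(a,b)\<leftarrow>L. c *s g a b) = c *s (\<Sum>(a,b)\<leftarrow>L. g a b)"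
  by (induction L) (auto simp: scale_right_distrib)

section \<open>Bilinear and trilinear maps\<close>

definition bilinear_map ::
  "('k::field \<Rightarrow> 'h::ab_group_add \<Rightarrow> 'h) \<Rightarrow> ('k \<Rightarrow> 'v::ab_group_add \<Rightarrow> 'v) \<Rightarrow> ('h \<Rightarrow> 'h \<Rightarrow> 'v) \<Rightarrow> bool"
  where "bilinear_map s1 s2 K \<longleftrightarrow>
    (\<forall>y. Vector_Spaces.linear s1 s2 (\<lambda>x. K x y)) \<and> (\<forall>x. Vector_Spaces.linear s1 s2 (K x))"

definition trilinear_map ::
  "('k::field \<Rightarrow> 'h::ab_group_add \<Rightarrow> 'h) \<Rightarrow> ('k \<Rightarrow> 'v::ab_group_add \<Rightarrow> 'v) \<Rightarrow> ('h \<Rightarrow> 'h \<Rightarrow> 'h \<Rightarrow> 'v) \<Rightarrow> bool"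
  where "trilinear_map s1 s2 F \<longleftrightarrow>
    (\<forall>y z. Vector_Spaces.linear s1 s2 (\<lambda>x. F x y z)) \<and> (\<forall>x z. Vector_Spaces.linear s1 s2 (\<lambda>y. F x y z))
    \<and> (\<forall>x y. Vector_Spaces.linear s1 s2 (F x y))"

lemma bilinear_mapI:
  assumes "Vector_Spaces.vector_space s1" "Vector_Spaces.vector_space s2"
    and "\<And>x x' y. K (x + x') y = K x y + K x' y" "\<And>c x y. K (s1 c x) y = s2 c (K x y)"
    and "\<And>x y y'. K x (y + y') = K x y + K x y'" "\<And>c x y. K x (s1 c y) = s2 c (K x y)"
  shows "bilinear_map s1 s2 K"
  unfolding bilinear_map_def using assms by (auto intro: vs_linearI)

lemma trilinear_mapI:
  assumes "Vector_Spaces.vector_space s1" "Vector_Spaces.vector_space s2"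
    and "\<And>x x' y z. F (x + x') y z = F x y z + F x' y z" "\<And>c x y z. F (s1 c x) y z = s2 c (F x y z)"
    and "\<And>x y y' z. F x (y + y') z = F x y z + F x y' z" "\<And>c x y z. F x (s1 c y) z = s2 c (F x y z)"
    and "\<And>x y z z'. F x y (z + z') = F x y z + F x y z'" "\<And>c x y z. F x y (s1 c z) = s2 c (F x y z)"
  shows "trilinear_map s1 s2 F"
  unfolding trilinear_map_def using assms by (auto intro: vs_linearI)

lemma bilinear_map_add_scale:
  assumes "bilinear_map s1 s2 K"
  shows "K (x + x') y = K x y + K x' y" "K (s1 c x) y = s2 c (K x y)"
    "K x (y + y') = K x y + K x y'" "K x (s1 c y) = s2 c (K x y)"
proof -
  have l1: "Vector_Spaces.linear s1 s2 (\<lambda>x. K x y)" and l2: "Vector_Spaces.linear s1 s2 (K x)"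
    using assms unfolding bilinear_map_def by blast+
  show "K (x + x') y = K x y + K x' y" using vs_linear_add[OF l1] by simp
  show "K (s1 c x) y = s2 c (K x y)" using vs_linear_scale[OF l1] by simp
  show "K x (y + y') = K x y + K x y'" using vs_linear_add[OF l2] by simp
  show "K x (s1 c y) = s2 c (K x y)" using vs_linear_scale[OF l2] by simp
qed

lemma trilinear_map_add_scale:
  assumes "trilinear_map s1 s2 F"
  shows "F (x + x') y z = F x y z + F x' y z" "F (s1 c x) y z = s2 c (F x y z)"
    "F x (y + y') z = F x y z + F x y' z" "F x (s1 c y) z = s2 c (F x y z)"
    "F x y (z + z') = F x y z + F x y z'" "F x y (s1 c z) = s2 c (F x y z)"
proof -
  have l1: "Vector_Spaces.linear s1 s2 (\<lambda>x. F x y z)" and l2: "Vector_Spaces.linear s1 s2 (\<lambda>y. F x y z)"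
    and l3: "Vector_Spaces.linear s1 s2 (F x y)"
    using assms unfolding trilinear_map_def by blast+
  show "F (x + x') y z = F x y z + F x' y z" using vs_linear_add[OF l1] by simp
  show "F (s1 c x) y z = s2 c (F x y z)" using vs_linear_scale[OF l1] by simp
  show "F x (y + y') z = F x y z + F x y' z" using vs_linear_add[OF l2] by simp
  show "F x (s1 c y) z = s2 c (F x y z)" using vs_linear_scale[OF l2] by simp
  show "F x y (z + z') = F x y z + F x y z'" using vs_linear_add[OF l3] by simp
  show "F x y (s1 c z) = s2 c (F x y z)" using vs_linear_scale[OF l3] by simp
qed

lemma bilinear_map_linear_left: "bilinear_map s1 s2 K \<Longrightarrow> Vector_Spaces.linear s1 s2 (\<lambda>x. K x y)"
  and bilinear_map_linear_right: "bilinear_map s1 s2 K \<Longrightarrow> Vector_Spaces.linear s1 s2 (K x)"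
  unfolding bilinear_map_def by blast+

lemma trilinear_map_linear_1: "trilinear_map s1 s2 F \<Longrightarrow> Vector_Spaces.linear s1 s2 (\<lambda>x. F x y z)"
  and trilinear_map_linear_2: "trilinear_map s1 s2 F \<Longrightarrow> Vector_Spaces.linear s1 s2 (\<lambda>y. F x y z)"
  and trilinear_map_linear_3: "trilinear_map s1 s2 F \<Longrightarrow> Vector_Spaces.linear s1 s2 (F x y)"
  unfolding trilinear_map_def by blast+

lemma (in vector_space) finite_coordinates:
  assumes "finite X"
  obtains B c where "finite B" "\<And>e. Vector_Spaces.linear scale (*) (c e)"
    "\<And>x. x \<in> X \<Longrightarrow> x = (\<Sum>e\<in>B. c e x *s e)"
proof -
  obtain E where E: "independent E" "UNIV \<subseteq> span E"
    using maximal_independent_subset[of UNIV] by blast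
  define c where "c e x = representation E x e" for e x
  define B where "B = (\<Union>x\<in>X. {e. c e x \<noteq> 0})"
  have "finite B"
    unfolding B_def c_def using assms finite_representation by blast
  moreover have "Vector_Spaces.linear scale (*) (c e)" for e
    unfolding c_def using linear_representation E by blast
  moreover have "x = (\<Sum>e\<in>B. c e x *s e)" if "x \<in> X" for x
  proof -
    have "x = (\<Sum>e | c e x \<noteq> 0. c e x *s e)"
      unfolding c_def using E by (simp add: sum_nonzero_representation_eq subset_eq)
    also have "\<dots> = (\<Sum>e\<in>B. c e x *s e)"
      using \<open>finite B\<close> that by (intro sum.mono_neutral_left) (auto simp: B_def)
    finally show ?thesis .
  qed
  ultimately show ?thesis using that by blast
qed

lemma bilinear_map_sum_expand:
  assumes K: "bilinear_map s1 s2 K"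
  shows "K (\<Sum>e\<in>B. s1 (a e) e) (\<Sum>e\<in>B. s1 (b e) e) = (\<Sum>e\<in>B. \<Sum>e'\<in>B. s2 (a e * b e') (K e e'))"
proof -
  note lin1 = bilinear_map_linear_left[OF K] and lin2 = bilinear_map_linear_right[OF K]
  interpret W: vector_space s2 by (rule vs_linear_vector_space_target[OF lin1])
  have "K (\<Sum>e\<in>B. s1 (a e) e) (\<Sum>e\<in>B. s1 (b e) e) = (\<Sum>e\<in>B. s2 (a e) (K e (\<Sum>e\<in>B. s1 (b e) e)))"
    by (simp add: vs_linear_sum[OF lin1] vs_linear_scale[OF lin1])
  also have "\<dots> = (\<Sum>e\<in>B. \<Sum>e'\<in>B. s2 (a e * b e') (K e e'))"
    by (simp add: vs_linear_sum[OF lin2] vs_linear_scale[OF lin2] W.scale_sum_right)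
  finally show ?thesis .
qed

lemma trilinear_map_sum_expand:
  assumes F: "trilinear_map s1 s2 F"
  shows "F (\<Sum>e\<in>B. s1 (a e) e) (\<Sum>e\<in>B. s1 (b e) e) (\<Sum>e\<in>B. s1 (c e) e)
    = (\<Sum>e\<in>B. \<Sum>e'\<in>B. \<Sum>e''\<in>B. s2 (a e * b e' * c e'') (F e e' e''))"
proof -
  note lin1 = trilinear_map_linear_1[OF F] and lin2 = trilinear_map_linear_2[OF F]
    and lin3 = trilinear_map_linear_3[OF F]
  interpret W: vector_space s2 by (rule vs_linear_vector_space_target[OF lin1])
  let ?b = "\<Sum>e\<in>B. s1 (b e) e" and ?c = "\<Sum>e\<in>B. s1 (c e) e"
  have "F (\<Sum>e\<in>B. s1 (a e) e) ?b ?c = (\<Sum>e\<in>B. s2 (a e) (F e ?b ?c))"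
    by (simp add: vs_linear_sum[OF lin1] vs_linear_scale[OF lin1])
  also have "\<dots> = (\<Sum>e\<in>B. \<Sum>e'\<in>B. s2 (a e * b e') (F e e' ?c))"
    by (simp add: vs_linear_sum[OF lin2] vs_linear_scale[OF lin2] W.scale_sum_right)
  also have "\<dots> = (\<Sum>e\<in>B. \<Sum>e'\<in>B. \<Sum>e''\<in>B. s2 (a e * b e' * c e'') (F e e' e''))"
    by (simp add: vs_linear_sum[OF lin3] vs_linear_scale[OF lin3] W.scale_sum_right)
  finally show ?thesis .
qed

lemma teq2_bilinear_sum_eq:
  fixes sc :: "'k::field \<Rightarrow> 'h::ring_1 \<Rightarrow> 'h"
  assumes vs: "Vector_Spaces.vector_space sc" and teq: "teq2 sc T U" and K: "bilinear_map sc s K"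
  shows "(\<Sum>(a,b)\<leftarrow>T. K a b) = (\<Sum>(a,b)\<leftarrow>U. K a b)"
proof -
  interpret V: vector_space sc by (rule vs)
  interpret W: vector_space s by (rule vs_linear_vector_space_target[OF bilinear_map_linear_left[OF K]])
  define X where "X = fst ` set (T @ U) \<union> snd ` set (T @ U)"
  have "finite X" by (simp add: X_def)
  then obtain B c where lin: "\<And>e. Vector_Spaces.linear sc (*) (c e)"
    and coord: "\<And>x. x \<in> X \<Longrightarrow> x = (\<Sum>e\<in>B. sc (c e x) e)"
    using V.finite_coordinates by metis
  have expand: "(\<Sum>(a,b)\<leftarrow>L. K a b) = (\<Sum>e\<in>B. \<Sum>e'\<in>B. s (\<Sum>(a,b)\<leftarrow>L. c e a * c e' b) (K e e'))"
    if "set L \<subseteq> set (T @ U)" for L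
  proof -
    have "(\<Sum>(a,b)\<leftarrow>L. K a b) = (\<Sum>(a,b)\<leftarrow>L. \<Sum>e\<in>B. \<Sum>e'\<in>B. s (c e a * c e' b) (K e e'))"
    proof (intro arg_cong[where f = sum_list] map_cong refl, clarify)
      fix a b assume "(a, b) \<in> set L"
      then have "a \<in> X" "b \<in> X"
        using that unfolding X_def by (auto intro: rev_image_eqI)
      then have "K a b = K (\<Sum>e\<in>B. sc (c e a) e) (\<Sum>e\<in>B. sc (c e b) e)"
        using coord by (intro arg_cong2[where f = K])
      then show "K a b = (\<Sum>e\<in>B. \<Sum>e'\<in>B. s (c e a * c e' b) (K e e'))"
        by (simp only: bilinear_map_sum_expand[OF K])
    qed
    also have "\<dots> = (\<Sum>e\<in>B. \<Sum>e'\<in>B. s (\<Sum>(a,b)\<leftarrow>L. c e a * c e' b) (K e e'))"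
      by (induction L) (auto simp: sum.distrib W.scale_left_distrib)
    finally show ?thesis .
  qed
  have "(\<Sum>(a,b)\<leftarrow>T. c e a * c e' b) = (\<Sum>(a,b)\<leftarrow>U. c e a * c e' b)" for e e'
    using teq lin unfolding teq2_def by blast
  then show ?thesis using expand[of T] expand[of U] by simp
qed

lemma teq3_trilinear_sum_eq:
  fixes sc :: "'k::field \<Rightarrow> 'h::ring_1 \<Rightarrow> 'h"
  assumes vs: "Vector_Spaces.vector_space sc" and teq: "teq3 sc T U" and F: "trilinear_map sc s F"
  shows "(\<Sum>(a,b,d)\<leftarrow>T. F a b d) = (\<Sum>(a,b,d)\<leftarrow>U. F a b d)"
proof -
  interpret V: vector_space sc by (rule vs)
  interpret W: vector_space s by (rule vs_linear_vector_space_target[OF trilinear_map_linear_1[OF F]])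
  define X where "X = fst ` set (T @ U) \<union> fst ` snd ` set (T @ U) \<union> snd ` snd ` set (T @ U)"
  have "finite X" by (simp add: X_def)
  then obtain B c where lin: "\<And>e. Vector_Spaces.linear sc (*) (c e)"
    and coord: "\<And>x. x \<in> X \<Longrightarrow> x = (\<Sum>e\<in>B. sc (c e x) e)"
    using V.finite_coordinates by metis
  have expand: "(\<Sum>(a,b,d)\<leftarrow>L. F a b d)
      = (\<Sum>e\<in>B. \<Sum>e'\<in>B. \<Sum>e''\<in>B. s (\<Sum>(a,b,d)\<leftarrow>L. c e a * c e' b * c e'' d) (F e e' e''))"
    if "set L \<subseteq> set (T @ U)" for L
  proof -
    have "(\<Sum>(a,b,d)\<leftarrow>L. F a b d)
        = (\<Sum>(a,b,d)\<leftarrow>L. \<Sum>e\<in>B. \<Sum>e'\<in>B. \<Sum>e''\<in>B. s (c e a * c e' b * c e'' d) (F e e' e''))"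
    proof (intro arg_cong[where f = sum_list] map_cong refl, clarify)
      fix a b d assume "(a, b, d) \<in> set L"
      then have "a \<in> X" "b \<in> X" "d \<in> X"
        using that unfolding X_def by (auto simp: image_image intro: rev_image_eqI)
      then have "F a b d = F (\<Sum>e\<in>B. sc (c e a) e) (\<Sum>e\<in>B. sc (c e b) e) (\<Sum>e\<in>B. sc (c e d) e)"
        using coord by simp
      then show "F a b d = (\<Sum>e\<in>B. \<Sum>e'\<in>B. \<Sum>e''\<in>B. s (c e a * c e' b * c e'' d) (F e e' e''))"
        by (simp only: trilinear_map_sum_expand[OF F])
    qed
    also have "\<dots> = (\<Sum>e\<in>B. \<Sum>e'\<in>B. \<Sum>e''\<in>B. s (\<Sum>(a,b,d)\<leftarrow>L. c e a * c e' b * c e'' d) (F e e' e''))"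
      by (induction L) (auto simp: sum.distrib W.scale_left_distrib)
    finally show ?thesis .
  qed
  have "(\<Sum>(a,b,d)\<leftarrow>T. c e a * c e' b * c e'' d) = (\<Sum>(a,b,d)\<leftarrow>U. c e a * c e' b * c e'' d)" for e e' e''
    using teq lin unfolding teq3_def by blast
  then show ?thesis using expand[of T] expand[of U] by simp
qed

section \<open>Weak Hopf algebras\<close>

locale weak_hopf =
  fixes sc :: "'k::field \<Rightarrow> 'h::ring_1 \<Rightarrow> 'h" and D :: "'h \<Rightarrow> ('h \<times> 'h) list"
    and eps :: "'h \<Rightarrow> 'k" and S :: "'h \<Rightarrow> 'h"
  assumes weak_hopf_algebra: "weak_hopf_algebra sc D eps S"
begin

abbreviation "\<epsilon>\<^sub>s \<equiv> eps_s sc D eps"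
abbreviation "\<epsilon>\<^sub>t \<equiv> eps_t sc D eps"

lemma scale_vector_space: "Vector_Spaces.vector_space sc"
  and scale_mult_left [simp]: "sc c x * y = sc c (x * y)"
  and scale_mult_right [simp]: "x * sc c y = sc c (x * y)"
  using weak_hopf_algebra unfolding weak_hopf_algebra_def k_algebra_def by metis+

lemma Delta_add: "teq2 sc (D (x + y)) (D x @ D y)"
  and Delta_scale: "teq2 sc (D (sc c x)) (map (\<lambda>(a,b). (sc c a, b)) (D x))"
  and counit_linear: "Vector_Spaces.linear sc (*) eps"
  and coassoc: "teq3 sc (cop2L D h) (cop2R D h)"
  and counit_left: "(\<Sum>(a,b)\<leftarrow>D h. sc (eps a) b) = h"
  and counit_right: "(\<Sum>(a,b)\<leftarrow>D h. sc (eps b) a) = h"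
  and Delta_mult: "teq2 sc (D (k * h)) (tmul2 (D k) (D h))"
  and Delta_unit_left:
    "teq3 sc (tmul3 (map (\<lambda>(x,y). (1,x,y)) (D 1)) (map (\<lambda>(x,y). (x,y,1)) (D 1))) (cop2L D 1)"
  and Delta_unit_right:
    "teq3 sc (cop2L D 1) (tmul3 (map (\<lambda>(x,y). (x,y,1)) (D 1)) (map (\<lambda>(x,y). (1,x,y)) (D 1)))"
  and antipode_linear: "Vector_Spaces.linear sc sc S"
  and sum_mult_antipode: "(\<Sum>(a,b)\<leftarrow>D h. a * S b) = \<epsilon>\<^sub>t h"
  and sum_antipode_mult: "(\<Sum>(a,b)\<leftarrow>D h. S a * b) = \<epsilon>\<^sub>s h"
  and antipode_convolution: "S h = (\<Sum>(a,b,c)\<leftarrow>cop2L D h. S a * b * S c)"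
  using weak_hopf_algebra unfolding weak_hopf_algebra_def by blast+

lemma counit_add [simp]: "eps (x + y) = eps x + eps y"
  and counit_scale [simp]: "eps (sc c x) = c * eps x"
  and antipode_add [simp]: "S (x + y) = S x + S y"
  and antipode_scale [simp]: "S (sc c x) = sc c (S x)"
  using counit_linear antipode_linear by (auto simp: vs_linear_add vs_linear_scale)

sublocale V: vector_space sc
  by (rule scale_vector_space)

lemma sum_Delta_linear:
  assumes K: "bilinear_map sc s K"
  shows "Vector_Spaces.linear sc s (\<lambda>x. \<Sum>(a,b)\<leftarrow>D x. K a b)"
proof -
  interpret W: vector_space s
    by (rule vs_linear_vector_space_target[OF bilinear_map_linear_left[OF K]])
  note teq_sum = teq2_bilinear_sum_eq[OF scale_vector_space _ K]
  show ?thesis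
  proof (rule vs_linearI[OF scale_vector_space W.vector_space_axioms])
    show "(\<Sum>(a,b)\<leftarrow>D (x + y). K a b) = (\<Sum>(a,b)\<leftarrow>D x. K a b) + (\<Sum>(a,b)\<leftarrow>D y. K a b)" for x y
      using teq_sum[OF Delta_add] by simp
    fix c x
    have "(\<Sum>(a,b)\<leftarrow>D (sc c x). K a b) = (\<Sum>(a,b)\<leftarrow>D x. K (sc c a) b)"
      using teq_sum[OF Delta_scale] by (simp add: sum_list_map_apfst del: map_map)
    also have "\<dots> = s c (\<Sum>(a,b)\<leftarrow>D x. K a b)"
      by (simp add: bilinear_map_add_scale[OF K] W.scale_sum_list_case_prod)
    finally show "(\<Sum>(a,b)\<leftarrow>D (sc c x). K a b) = s c (\<Sum>(a,b)\<leftarrow>D x. K a b)" .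
  qed
qed

text \<open>The middle factor of \<open>(1 \<otimes> \<Delta>(1))(\<Delta>(1) \<otimes> 1) = \<Delta>\<^sup>2(1)\<close>, contracted with the counit.\<close>

lemma sum_Delta_unit_counit_middle:
  assumes K: "bilinear_map sc s K"
  shows "(\<Sum>(x,y)\<leftarrow>D 1. \<Sum>(x',y')\<leftarrow>D 1. s (eps (x * y')) (K x' y)) = (\<Sum>(a,b)\<leftarrow>D 1. K a b)"
proof -
  interpret W: vector_space s
    by (rule vs_linear_vector_space_target[OF bilinear_map_linear_left[OF K]])
  let ?F = "\<lambda>a b c. s (eps b) (K a c)"
  have F: "trilinear_map sc s ?F"
    by (intro trilinear_mapI scale_vector_space W.vector_space_axioms)
      (simp_all add: bilinear_map_add_scale[OF K] W.scale_left_distrib W.scale_right_distrib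
        W.scale_left_commute)
  have "(\<Sum>(x,y)\<leftarrow>D 1. \<Sum>(x',y')\<leftarrow>D 1. s (eps (x * y')) (K x' y))
      = (\<Sum>(a,b,c)\<leftarrow>tmul3 (map (\<lambda>(x,y). (1,x,y)) (D 1)) (map (\<lambda>(x,y). (x,y,1)) (D 1)). ?F a b c)"
    by (simp add: sum_tmul3 sum_list_map_unit_component del: map_map)
  also have "\<dots> = (\<Sum>(a,b,c)\<leftarrow>cop2L D 1. ?F a b c)"
    by (rule teq3_trilinear_sum_eq[OF scale_vector_space Delta_unit_left F])
  also have "\<dots> = (\<Sum>(u,c)\<leftarrow>D 1. K (\<Sum>(a,b)\<leftarrow>D u. sc (eps b) a) c)"
    by (simp add: sum_cop2L vs_linear_sum_list[OF bilinear_map_linear_left[OF K]]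
        bilinear_map_add_scale[OF K])
  finally show ?thesis by (simp add: counit_right)
qed

lemma Delta_unit_eps_s_left:
  assumes K: "bilinear_map sc s K"
  shows "(\<Sum>(a,b)\<leftarrow>D 1. K (\<epsilon>\<^sub>s a) b) = (\<Sum>(a,b)\<leftarrow>D 1. K a b)"
  unfolding eps_s_def
  by (simp add: vs_linear_sum_list[OF bilinear_map_linear_left[OF K]] bilinear_map_add_scale[OF K]
      sum_Delta_unit_counit_middle[OF K])

lemma Delta_unit_eps_t_right:
  assumes K: "bilinear_map sc s K"
  shows "(\<Sum>(a,b)\<leftarrow>D 1. K a (\<epsilon>\<^sub>t b)) = (\<Sum>(a,b)\<leftarrow>D 1. K a b)"
proof -
  have "(\<Sum>(a,b)\<leftarrow>D 1. K a (\<epsilon>\<^sub>t b)) = (\<Sum>(a,b)\<leftarrow>D 1. \<Sum>(x,y)\<leftarrow>D 1. s (eps (x * b)) (K a y))"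
    unfolding eps_t_def
    by (simp add: vs_linear_sum_list[OF bilinear_map_linear_right[OF K]] bilinear_map_add_scale[OF K])
  also have "\<dots> = (\<Sum>(x,y)\<leftarrow>D 1. \<Sum>(a,b)\<leftarrow>D 1. s (eps (x * b)) (K a y))"
    by (rule sum_list_case_prod_swap)
  also have "\<dots> = (\<Sum>(a,b)\<leftarrow>D 1. K a b)"
    by (rule sum_Delta_unit_counit_middle[OF K])
  finally show ?thesis .
qed

lemma Delta_eps_t:
  assumes K: "bilinear_map sc s K"
  shows "(\<Sum>(a,b)\<leftarrow>D (\<epsilon>\<^sub>t g). K a b) = (\<Sum>(a,b)\<leftarrow>D 1. K (\<epsilon>\<^sub>t g * a) b)"
proof -
  interpret W: vector_space s
    by (rule vs_linear_vector_space_target[OF bilinear_map_linear_left[OF K]])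
  let ?F = "\<lambda>a b c. s (eps (a * g)) (K b c)"
  have F: "trilinear_map sc s ?F"
    by (intro trilinear_mapI scale_vector_space W.vector_space_axioms)
      (simp_all add: bilinear_map_add_scale[OF K] distrib_right W.scale_left_distrib
        W.scale_right_distrib W.scale_left_commute)
  have "(\<Sum>(a,b)\<leftarrow>D (\<epsilon>\<^sub>t g). K a b) = (\<Sum>(p,q)\<leftarrow>D 1. \<Sum>(b,c)\<leftarrow>D q. ?F p b c)"
    unfolding eps_t_def
    by (simp add: vs_linear_sum_list[OF sum_Delta_linear[OF K]] vs_linear_scale[OF sum_Delta_linear[OF K]]
        W.scale_sum_list_case_prod)
  also have "\<dots> = (\<Sum>(a,b,c)\<leftarrow>cop2R D 1. ?F a b c)"
    by (rule sum_cop2R[symmetric])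
  also have "\<dots> = (\<Sum>(a,b,c)\<leftarrow>cop2L D 1. ?F a b c)"
    by (rule teq3_trilinear_sum_eq[OF scale_vector_space coassoc F, symmetric])
  also have "\<dots> = (\<Sum>(a,b,c)\<leftarrow>tmul3 (map (\<lambda>(x,y). (x,y,1)) (D 1)) (map (\<lambda>(x,y). (1,x,y)) (D 1)). ?F a b c)"
    by (rule teq3_trilinear_sum_eq[OF scale_vector_space Delta_unit_right F])
  also have "\<dots> = (\<Sum>(x,y)\<leftarrow>D 1. \<Sum>(x',y')\<leftarrow>D 1. s (eps (x * g)) (K (y * x') y'))"
    by (simp add: sum_tmul3 sum_list_map_unit_component del: map_map)
  also have "\<dots> = (\<Sum>(x',y')\<leftarrow>D 1. \<Sum>(x,y)\<leftarrow>D 1. s (eps (x * g)) (K (y * x') y'))"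
    by (rule sum_list_case_prod_swap)
  also have "\<dots> = (\<Sum>(a,b)\<leftarrow>D 1. K (\<epsilon>\<^sub>t g * a) b)"
    unfolding eps_t_def
    by (simp add: sum_list_case_prod_mult_right[symmetric] vs_linear_sum_list[OF bilinear_map_linear_left[OF K]]
        bilinear_map_add_scale[OF K])
  finally show ?thesis .
qed

lemma Delta_eps_s:
  assumes K: "bilinear_map sc s K"
  shows "(\<Sum>(a,b)\<leftarrow>D (\<epsilon>\<^sub>s g). K a b) = (\<Sum>(a,b)\<leftarrow>D 1. K a (b * \<epsilon>\<^sub>s g))"
proof -
  interpret W: vector_space s
    by (rule vs_linear_vector_space_target[OF bilinear_map_linear_left[OF K]])
  let ?F = "\<lambda>a b c. s (eps (g * c)) (K a b)"
  have F: "trilinear_map sc s ?F"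
    by (intro trilinear_mapI scale_vector_space W.vector_space_axioms)
      (simp_all add: bilinear_map_add_scale[OF K] distrib_left W.scale_left_distrib
        W.scale_right_distrib W.scale_left_commute)
  have "(\<Sum>(a,b)\<leftarrow>D (\<epsilon>\<^sub>s g). K a b) = (\<Sum>(p,q)\<leftarrow>D 1. \<Sum>(a,b)\<leftarrow>D p. ?F a b q)"
    unfolding eps_s_def
    by (simp add: vs_linear_sum_list[OF sum_Delta_linear[OF K]] vs_linear_scale[OF sum_Delta_linear[OF K]]
        W.scale_sum_list_case_prod)
  also have "\<dots> = (\<Sum>(a,b,c)\<leftarrow>cop2L D 1. ?F a b c)"
    by (rule sum_cop2L[symmetric])
  also have "\<dots> = (\<Sum>(a,b,c)\<leftarrow>tmul3 (map (\<lambda>(x,y). (x,y,1)) (D 1)) (map (\<lambda>(x,y). (1,x,y)) (D 1)). ?F a b c)"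
    by (rule teq3_trilinear_sum_eq[OF scale_vector_space Delta_unit_right F])
  also have "\<dots> = (\<Sum>(x,y)\<leftarrow>D 1. \<Sum>(x',y')\<leftarrow>D 1. s (eps (g * y')) (K x (y * x')))"
    by (simp add: sum_tmul3 sum_list_map_unit_component del: map_map)
  also have "\<dots> = (\<Sum>(a,b)\<leftarrow>D 1. K a (b * \<epsilon>\<^sub>s g))"
    unfolding eps_s_def
    by (simp add: sum_list_case_prod_mult_left[symmetric] vs_linear_sum_list[OF bilinear_map_linear_right[OF K]]
        bilinear_map_add_scale[OF K])
  finally show ?thesis .
qed

lemma Delta_eps_t_mult:
  assumes K: "bilinear_map sc s K"
  shows "(\<Sum>(a,b)\<leftarrow>D (\<epsilon>\<^sub>t g * h). K a b) = (\<Sum>(a,b)\<leftarrow>D h. K (\<epsilon>\<^sub>t g * a) b)"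
proof -
  interpret W: vector_space s
    by (rule vs_linear_vector_space_target[OF bilinear_map_linear_left[OF K]])
  let ?M = "\<lambda>p q. \<Sum>(a,b)\<leftarrow>D h. K (p * a) (q * b)"
  have M: "bilinear_map sc s ?M"
    by (intro bilinear_mapI scale_vector_space W.vector_space_axioms)
      (simp_all add: distrib_right bilinear_map_add_scale[OF K] sum_list_case_prod_add
        W.scale_sum_list_case_prod)
  have K': "bilinear_map sc s (\<lambda>a b. K (\<epsilon>\<^sub>t g * a) b)"
    by (intro bilinear_mapI scale_vector_space W.vector_space_axioms)
      (simp_all add: distrib_left bilinear_map_add_scale[OF K])
  have "(\<Sum>(a,b)\<leftarrow>D (\<epsilon>\<^sub>t g * h). K a b) = (\<Sum>(p,q)\<leftarrow>D (\<epsilon>\<^sub>t g). ?M p q)"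
    by (simp add: teq2_bilinear_sum_eq[OF scale_vector_space Delta_mult K] sum_tmul2)
  also have "\<dots> = (\<Sum>(p,q)\<leftarrow>D 1. ?M (\<epsilon>\<^sub>t g * p) q)"
    by (rule Delta_eps_t[OF M])
  also have "\<dots> = (\<Sum>(a,b)\<leftarrow>tmul2 (D 1) (D h). K (\<epsilon>\<^sub>t g * a) b)"
    by (simp add: sum_tmul2 mult.assoc)
  also have "\<dots> = (\<Sum>(a,b)\<leftarrow>D (1 * h). K (\<epsilon>\<^sub>t g * a) b)"
    by (rule teq2_bilinear_sum_eq[OF scale_vector_space Delta_mult K', symmetric])
  finally show ?thesis by simp
qed

lemma Delta_mult_eps_s:
  assumes K: "bilinear_map sc s K"
  shows "(\<Sum>(a,b)\<leftarrow>D (h * \<epsilon>\<^sub>s g). K a b) = (\<Sum>(a,b)\<leftarrow>D h. K a (b * \<epsilon>\<^sub>s g))"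
proof -
  interpret W: vector_space s
    by (rule vs_linear_vector_space_target[OF bilinear_map_linear_left[OF K]])
  have Kab: "bilinear_map sc s (\<lambda>p q. K (a * p) (b * q))" for a b
    by (intro bilinear_mapI scale_vector_space W.vector_space_axioms)
      (simp_all add: distrib_left bilinear_map_add_scale[OF K])
  have K': "bilinear_map sc s (\<lambda>a b. K a (b * \<epsilon>\<^sub>s g))"
    by (intro bilinear_mapI scale_vector_space W.vector_space_axioms)
      (simp_all add: distrib_right bilinear_map_add_scale[OF K])
  have "(\<Sum>(a,b)\<leftarrow>D (h * \<epsilon>\<^sub>s g). K a b) = (\<Sum>(a,b)\<leftarrow>D h. \<Sum>(p,q)\<leftarrow>D (\<epsilon>\<^sub>s g). K (a * p) (b * q))"
    by (simp add: teq2_bilinear_sum_eq[OF scale_vector_space Delta_mult K] sum_tmul2)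
  also have "\<dots> = (\<Sum>(a,b)\<leftarrow>D h. \<Sum>(p,q)\<leftarrow>D 1. K (a * p) (b * (q * \<epsilon>\<^sub>s g)))"
    by (intro sum_list_case_prod_cong Delta_eps_s[OF Kab])
  also have "\<dots> = (\<Sum>(a,b)\<leftarrow>tmul2 (D h) (D 1). K a (b * \<epsilon>\<^sub>s g))"
    by (simp add: sum_tmul2 mult.assoc)
  also have "\<dots> = (\<Sum>(a,b)\<leftarrow>D (h * 1). K a (b * \<epsilon>\<^sub>s g))"
    by (rule teq2_bilinear_sum_eq[OF scale_vector_space Delta_mult K', symmetric])
  finally show ?thesis by simp
qed

lemma eps_s_add [simp]: "\<epsilon>\<^sub>s (x + y) = \<epsilon>\<^sub>s x + \<epsilon>\<^sub>s y"
  and eps_s_scale [simp]: "\<epsilon>\<^sub>s (sc c x) = sc c (\<epsilon>\<^sub>s x)"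
  and eps_t_add [simp]: "\<epsilon>\<^sub>t (x + y) = \<epsilon>\<^sub>t x + \<epsilon>\<^sub>t y"
  and eps_t_scale [simp]: "\<epsilon>\<^sub>t (sc c x) = sc c (\<epsilon>\<^sub>t x)"
proof -
  \<comment> \<open>the scalar multiplication occurs eta-contracted in the defining sums\<close>
  have "sc (a + b) = (\<lambda>x. sc a x + sc b x)" "sc (a * b) = (\<lambda>x. sc a (sc b x))" for a b
    by (auto simp: V.scale_left_distrib)
  then show "\<epsilon>\<^sub>s (x + y) = \<epsilon>\<^sub>s x + \<epsilon>\<^sub>s y" "\<epsilon>\<^sub>s (sc c x) = sc c (\<epsilon>\<^sub>s x)"
    "\<epsilon>\<^sub>t (x + y) = \<epsilon>\<^sub>t x + \<epsilon>\<^sub>t y" "\<epsilon>\<^sub>t (sc c x) = sc c (\<epsilon>\<^sub>t x)"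
    unfolding eps_s_def eps_t_def
    by (simp_all add: distrib_left distrib_right V.scale_left_distrib sum_list_case_prod_add
        V.scale_sum_list_case_prod[symmetric] del: V.scale_scale)
qed

lemma antipode_eps_s: "S (\<epsilon>\<^sub>s g) = \<epsilon>\<^sub>t (\<epsilon>\<^sub>s g)"
proof -
  let ?y = "\<epsilon>\<^sub>s g"
  have bilinear: "bilinear_map sc sc (\<lambda>a b. f a * S (b * x))"
    if "\<And>a b. f (a + b) = f a + f b" "\<And>c a. f (sc c a) = sc c (f a)" for f x
    by (intro bilinear_mapI scale_vector_space) (simp_all add: that distrib_left distrib_right)
  have "S ?y = (\<Sum>(u,c)\<leftarrow>D ?y. \<epsilon>\<^sub>s u * S c)"
    by (simp add: antipode_convolution[of ?y] sum_cop2L sum_list_case_prod_mult_right sum_antipode_mult)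
  also have "\<dots> = (\<Sum>(p,q)\<leftarrow>D 1. \<epsilon>\<^sub>s p * S (q * ?y))"
    using Delta_eps_s[OF bilinear[of "\<epsilon>\<^sub>s" 1]] by simp
  also have "\<dots> = (\<Sum>(p,q)\<leftarrow>D 1. p * S (q * ?y))"
    using Delta_unit_eps_s_left[OF bilinear[of "\<lambda>a. a" ?y]] by simp
  also have "\<dots> = (\<Sum>(a,b)\<leftarrow>D ?y. a * S b)"
    using Delta_eps_s[OF bilinear[of "\<lambda>a. a" 1]] by simp
  also have "\<dots> = \<epsilon>\<^sub>t ?y"
    by (rule sum_mult_antipode)
  finally show ?thesis .
qed

lemma antipode_eps_t: "S (\<epsilon>\<^sub>t g) = \<epsilon>\<^sub>s (\<epsilon>\<^sub>t g)"
proof -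
  let ?z = "\<epsilon>\<^sub>t g"
  have bilinear: "bilinear_map sc sc (\<lambda>a b. S (x * a) * f b)"
    if "\<And>a b. f (a + b) = f a + f b" "\<And>c a. f (sc c a) = sc c (f a)" for f x
    by (intro bilinear_mapI scale_vector_space) (simp_all add: that distrib_left distrib_right)
  have SbS: "trilinear_map sc sc (\<lambda>a b c. S a * b * S c)"
    by (intro trilinear_mapI scale_vector_space) (simp_all add: distrib_left distrib_right)
  have "S ?z = (\<Sum>(a,b,c)\<leftarrow>cop2R D ?z. S a * b * S c)"
    unfolding antipode_convolution[of ?z] by (rule teq3_trilinear_sum_eq[OF scale_vector_space coassoc SbS])
  also have "\<dots> = (\<Sum>(a,u)\<leftarrow>D ?z. S a * \<epsilon>\<^sub>t u)"
    by (simp add: sum_cop2R sum_list_case_prod_mult_left mult.assoc sum_mult_antipode)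
  also have "\<dots> = (\<Sum>(p,q)\<leftarrow>D 1. S (?z * p) * \<epsilon>\<^sub>t q)"
    using Delta_eps_t[OF bilinear[of "\<epsilon>\<^sub>t" 1]] by simp
  also have "\<dots> = (\<Sum>(p,q)\<leftarrow>D 1. S (?z * p) * q)"
    using Delta_unit_eps_t_right[OF bilinear[of "\<lambda>a. a" ?z]] by simp
  also have "\<dots> = (\<Sum>(a,b)\<leftarrow>D ?z. S a * b)"
    using Delta_eps_t[OF bilinear[of "\<lambda>a. a" 1]] by simp
  also have "\<dots> = \<epsilon>\<^sub>s ?z"
    by (rule sum_antipode_mult)
  finally show ?thesis .
qed

lemma cop2L_eps_t_mult:
  assumes F: "trilinear_map sc s F"
  shows "(\<Sum>(a,b,c)\<leftarrow>cop2L D (\<epsilon>\<^sub>t g * h). F a b c) = (\<Sum>(a,b,c)\<leftarrow>cop2L D h. F (\<epsilon>\<^sub>t g * a) b c)"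
proof -
  interpret W: vector_space s
    by (rule vs_linear_vector_space_target[OF trilinear_map_linear_1[OF F]])
  have Fc: "bilinear_map sc s (\<lambda>a b. F a b c)" for c
    using F unfolding trilinear_map_def bilinear_map_def by blast
  let ?G = "\<lambda>u c. \<Sum>(a,b)\<leftarrow>D u. F a b c"
  have G: "bilinear_map sc s ?G"
    unfolding bilinear_map_def
  proof (intro allI conjI)
    show "Vector_Spaces.linear sc s (\<lambda>u. ?G u c)" for c
      by (rule sum_Delta_linear[OF Fc])
    show "Vector_Spaces.linear sc s (?G u)" for u
      by (intro vs_linearI scale_vector_space W.vector_space_axioms)
        (simp_all add: trilinear_map_add_scale[OF F] sum_list_case_prod_add W.scale_sum_list_case_prod)
  qed
  have "(\<Sum>(a,b,c)\<leftarrow>cop2L D (\<epsilon>\<^sub>t g * h). F a b c) = (\<Sum>(u,c)\<leftarrow>D h. ?G (\<epsilon>\<^sub>t g * u) c)"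
    by (simp add: sum_cop2L Delta_eps_t_mult[OF G])
  also have "\<dots> = (\<Sum>(a,b,c)\<leftarrow>cop2L D h. F (\<epsilon>\<^sub>t g * a) b c)"
    by (simp add: sum_cop2L Delta_eps_t_mult[OF Fc])
  finally show ?thesis .
qed

lemma cop2R_mult_eps_s:
  assumes F: "trilinear_map sc s F"
  shows "(\<Sum>(a,b,c)\<leftarrow>cop2R D (h * \<epsilon>\<^sub>s g). F a b c) = (\<Sum>(a,b,c)\<leftarrow>cop2R D h. F a b (c * \<epsilon>\<^sub>s g))"
proof -
  interpret W: vector_space s
    by (rule vs_linear_vector_space_target[OF trilinear_map_linear_1[OF F]])
  have Fa: "bilinear_map sc s (F a)" for a
    using F unfolding trilinear_map_def bilinear_map_def by blast
  let ?G = "\<lambda>a u. \<Sum>(b,c)\<leftarrow>D u. F a b c"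
  have G: "bilinear_map sc s ?G"
    unfolding bilinear_map_def
  proof (intro allI conjI)
    show "Vector_Spaces.linear sc s (?G a)" for a
      by (rule sum_Delta_linear[OF Fa])
    show "Vector_Spaces.linear sc s (\<lambda>a. ?G a u)" for u
      by (intro vs_linearI scale_vector_space W.vector_space_axioms)
        (simp_all add: trilinear_map_add_scale[OF F] sum_list_case_prod_add W.scale_sum_list_case_prod)
  qed
  have "(\<Sum>(a,b,c)\<leftarrow>cop2R D (h * \<epsilon>\<^sub>s g). F a b c) = (\<Sum>(a,u)\<leftarrow>D h. ?G a (u * \<epsilon>\<^sub>s g))"
    by (simp add: sum_cop2R Delta_mult_eps_s[OF G])
  also have "\<dots> = (\<Sum>(a,b,c)\<leftarrow>cop2R D h. F a b (c * \<epsilon>\<^sub>s g))"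
    by (simp add: sum_cop2R Delta_mult_eps_s[OF Fa])
  finally show ?thesis .
qed

end

section \<open>Partial representations\<close>

locale weak_hopf_partial_rep = weak_hopf sc D eps S
  for sc :: "'k::field \<Rightarrow> 'h::ring_1 \<Rightarrow> 'h" and D eps S +
  fixes scA :: "'k \<Rightarrow> 'a::ring_1 \<Rightarrow> 'a" and \<pi> :: "'h \<Rightarrow> 'a"
  assumes target_k_algebra: "k_algebra scA" and partial_rep: "partial_rep sc D S scA \<pi>"
begin

lemma target_vector_space: "Vector_Spaces.vector_space scA"
  and target_scale_mult_left [simp]: "scA c x * y = scA c (x * y)"
  and target_scale_mult_right [simp]: "x * scA c y = scA c (x * y)"
  using target_k_algebra unfolding k_algebra_def by metis+

lemma pi_linear: "Vector_Spaces.linear sc scA \<pi>"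
  and PR1: "\<pi> 1 = 1"
  and PR2: "\<pi> h * (\<Sum>(a,b)\<leftarrow>D k. \<pi> a * \<pi> (S b)) = (\<Sum>(a,b)\<leftarrow>D k. \<pi> (h * a) * \<pi> (S b))"
  and PR5: "(\<Sum>(a,b)\<leftarrow>D h. \<pi> (S a) * \<pi> b) * \<pi> k = (\<Sum>(a,b)\<leftarrow>D h. \<pi> (S a) * \<pi> (b * k))"
  and PR6: "\<pi> h = (\<Sum>(a,b,c)\<leftarrow>cop2L D h. \<pi> a * \<pi> (S b) * \<pi> c)"
  using partial_rep unfolding partial_rep_def by blast+

lemma pi_add [simp]: "\<pi> (x + y) = \<pi> x + \<pi> y"
  and pi_scale [simp]: "\<pi> (sc c x) = scA c (\<pi> x)"
  using pi_linear by (auto simp: vs_linear_add vs_linear_scale)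

lemma bilinear_pi_antipode_pi: "bilinear_map sc scA (\<lambda>a b. \<pi> (S a) * \<pi> (b * x))"
  and bilinear_pi_pi_antipode: "bilinear_map sc scA (\<lambda>a b. \<pi> (x * a) * \<pi> (S b))"
  and bilinear_pi_antipode_mult: "bilinear_map sc scA (\<lambda>a b. \<pi> (S a * b))"
  and bilinear_pi_mult_antipode: "bilinear_map sc scA (\<lambda>a b. \<pi> (a * S b))"
  by (intro bilinear_mapI scale_vector_space target_vector_space; simp add: distrib_left distrib_right)+

lemma trilinear_pi_pi_antipode_pi: "trilinear_map sc scA (\<lambda>a b c. \<pi> a * \<pi> (S b) * \<pi> c)"
  by (intro trilinear_mapI scale_vector_space target_vector_space) (simp_all add: distrib_left distrib_right)

lemma PR6_cop2R: "\<pi> h = (\<Sum>(a,b,c)\<leftarrow>cop2R D h. \<pi> a * \<pi> (S b) * \<pi> c)"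
  unfolding PR6[of h] by (rule teq3_trilinear_sum_eq[OF scale_vector_space coassoc trilinear_pi_pi_antipode_pi])

lemma PR6_nested: "\<pi> h = (\<Sum>(u,c)\<leftarrow>D h. (\<Sum>(a,b)\<leftarrow>D u. \<pi> a * \<pi> (S b)) * \<pi> c)"
  by (simp add: PR6[of h] sum_cop2L sum_list_case_prod_mult_right)

lemma PR6_cop2R_nested: "\<pi> h = (\<Sum>(a,u)\<leftarrow>D h. \<pi> a * (\<Sum>(b,c)\<leftarrow>D u. \<pi> (S b) * \<pi> c))"
  by (simp add: PR6_cop2R[of h] sum_cop2R sum_list_case_prod_mult_left mult.assoc)

lemma pi_eps_t_mult: "\<pi> (\<epsilon>\<^sub>t g) * \<pi> h = \<pi> (\<epsilon>\<^sub>t g * h)"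
proof -
  have "\<pi> (\<epsilon>\<^sub>t g) * \<pi> h = (\<Sum>(u,c)\<leftarrow>D h. (\<pi> (\<epsilon>\<^sub>t g) * (\<Sum>(a,b)\<leftarrow>D u. \<pi> a * \<pi> (S b))) * \<pi> c)"
    by (simp only: PR6_nested[of h] sum_list_case_prod_mult_left[where L = "D h", symmetric] mult.assoc)
  also have "\<dots> = (\<Sum>(a,b,c)\<leftarrow>cop2L D h. \<pi> (\<epsilon>\<^sub>t g * a) * \<pi> (S b) * \<pi> c)"
    by (simp add: PR2 sum_cop2L sum_list_case_prod_mult_right)
  also have "\<dots> = \<pi> (\<epsilon>\<^sub>t g * h)"
    by (simp add: PR6[of "\<epsilon>\<^sub>t g * h"] cop2L_eps_t_mult[OF trilinear_pi_pi_antipode_pi])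
  finally show ?thesis .
qed

lemma pi_mult_eps_s: "\<pi> h * \<pi> (\<epsilon>\<^sub>s g) = \<pi> (h * \<epsilon>\<^sub>s g)"
proof -
  have "\<pi> h * \<pi> (\<epsilon>\<^sub>s g) = (\<Sum>(a,u)\<leftarrow>D h. \<pi> a * ((\<Sum>(b,c)\<leftarrow>D u. \<pi> (S b) * \<pi> c) * \<pi> (\<epsilon>\<^sub>s g)))"
    by (simp only: PR6_cop2R_nested[of h] sum_list_case_prod_mult_right[where L = "D h", symmetric] mult.assoc)
  also have "\<dots> = (\<Sum>(a,b,c)\<leftarrow>cop2R D h. \<pi> a * \<pi> (S b) * \<pi> (c * \<epsilon>\<^sub>s g))"
    by (simp add: PR5 sum_cop2R sum_list_case_prod_mult_left mult.assoc)
  also have "\<dots> = \<pi> (h * \<epsilon>\<^sub>s g)"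
    by (simp add: PR6_cop2R[of "h * \<epsilon>\<^sub>s g"] cop2R_mult_eps_s[OF trilinear_pi_pi_antipode_pi])
  finally show ?thesis .
qed

lemma sum_Delta_unit_pi_antipode_pi: "(\<Sum>(a,b)\<leftarrow>D 1. \<pi> (S a) * \<pi> b) = 1"
proof -
  have "(\<Sum>(a,b)\<leftarrow>D 1. \<pi> (S a) * \<pi> b) = (\<Sum>(a,b)\<leftarrow>D 1. \<pi> (S (\<epsilon>\<^sub>s a)) * \<pi> b)"
    using Delta_unit_eps_s_left[OF bilinear_pi_antipode_pi[of 1]] by simp
  also have "\<dots> = (\<Sum>(a,b)\<leftarrow>D 1. \<pi> (S (\<epsilon>\<^sub>s a) * b))"
    by (simp add: antipode_eps_s pi_eps_t_mult)
  also have "\<dots> = \<pi> (\<Sum>(a,b)\<leftarrow>D 1. S a * b)"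
    by (simp add: Delta_unit_eps_s_left[OF bilinear_pi_antipode_mult] vs_linear_sum_list[OF pi_linear])
  finally show ?thesis by (simp add: sum_antipode_mult eps_s_def counit_right PR1)
qed

lemma sum_Delta_unit_pi_pi_antipode: "(\<Sum>(a,b)\<leftarrow>D 1. \<pi> a * \<pi> (S b)) = 1"
proof -
  have "(\<Sum>(a,b)\<leftarrow>D 1. \<pi> a * \<pi> (S b)) = (\<Sum>(a,b)\<leftarrow>D 1. \<pi> a * \<pi> (S (\<epsilon>\<^sub>t b)))"
    using Delta_unit_eps_t_right[OF bilinear_pi_pi_antipode[of 1]] by simp
  also have "\<dots> = (\<Sum>(a,b)\<leftarrow>D 1. \<pi> (a * S (\<epsilon>\<^sub>t b)))"
    by (simp add: antipode_eps_t pi_mult_eps_s)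
  also have "\<dots> = \<pi> (\<Sum>(a,b)\<leftarrow>D 1. a * S b)"
    by (simp add: Delta_unit_eps_t_right[OF bilinear_pi_mult_antipode] vs_linear_sum_list[OF pi_linear])
  finally show ?thesis by (simp add: sum_mult_antipode eps_t_def counit_left PR1)
qed

lemma sum_Delta_unit_pi_antipode_pi_mult: "(\<Sum>(a,b)\<leftarrow>D 1. \<pi> (S a) * \<pi> (b * x)) = \<pi> x"
proof -
  have "(\<Sum>(a,b)\<leftarrow>D 1. \<pi> (S a) * \<pi> (b * x)) = (\<Sum>(a,b)\<leftarrow>D 1. \<pi> (S a) * \<pi> (\<epsilon>\<^sub>t b * x))"
    by (rule Delta_unit_eps_t_right[OF bilinear_pi_antipode_pi, symmetric])
  also have "\<dots> = (\<Sum>(a,b)\<leftarrow>D 1. \<pi> (S a) * \<pi> (\<epsilon>\<^sub>t b)) * \<pi> x"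
    by (simp add: pi_eps_t_mult[symmetric] mult.assoc[symmetric] sum_list_case_prod_mult_right)
  also have "\<dots> = \<pi> x"
    using Delta_unit_eps_t_right[OF bilinear_pi_antipode_pi[of 1]]
    by (simp add: sum_Delta_unit_pi_antipode_pi)
  finally show ?thesis .
qed

lemma sum_Delta_unit_mult_pi_pi_antipode: "(\<Sum>(a,b)\<leftarrow>D 1. \<pi> (x * a) * \<pi> (S b)) = \<pi> x"
proof -
  have "(\<Sum>(a,b)\<leftarrow>D 1. \<pi> (x * a) * \<pi> (S b)) = (\<Sum>(a,b)\<leftarrow>D 1. \<pi> (x * \<epsilon>\<^sub>s a) * \<pi> (S b))"
    by (rule Delta_unit_eps_s_left[OF bilinear_pi_pi_antipode, symmetric])
  also have "\<dots> = \<pi> x * (\<Sum>(a,b)\<leftarrow>D 1. \<pi> (\<epsilon>\<^sub>s a) * \<pi> (S b))"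
    by (simp add: pi_mult_eps_s[symmetric] mult.assoc sum_list_case_prod_mult_left)
  also have "\<dots> = \<pi> x"
    using Delta_unit_eps_s_left[OF bilinear_pi_pi_antipode[of 1]]
    by (simp add: sum_Delta_unit_pi_pi_antipode)
  finally show ?thesis .
qed

lemma pi_eps_s_mult: "\<pi> (\<epsilon>\<^sub>s g) * \<pi> h = \<pi> (\<epsilon>\<^sub>s g * h)"
proof -
  have Delta_eps_s_pi: "(\<Sum>(a,b)\<leftarrow>D (\<epsilon>\<^sub>s g). \<pi> (S a) * \<pi> (b * y)) = \<pi> (\<epsilon>\<^sub>s g * y)" for y
    using Delta_eps_s[OF bilinear_pi_antipode_pi[of y]]
    by (simp add: mult.assoc sum_Delta_unit_pi_antipode_pi_mult)
  have "\<pi> (\<epsilon>\<^sub>s g) * \<pi> h = (\<Sum>(a,b)\<leftarrow>D (\<epsilon>\<^sub>s g). \<pi> (S a) * \<pi> b) * \<pi> h"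
    using Delta_eps_s_pi[of 1] by simp
  also have "\<dots> = \<pi> (\<epsilon>\<^sub>s g * h)"
    by (simp add: PR5 Delta_eps_s_pi)
  finally show ?thesis .
qed

lemma pi_mult_eps_t: "\<pi> h * \<pi> (\<epsilon>\<^sub>t g) = \<pi> (h * \<epsilon>\<^sub>t g)"
proof -
  have Delta_eps_t_pi: "(\<Sum>(a,b)\<leftarrow>D (\<epsilon>\<^sub>t g). \<pi> (y * a) * \<pi> (S b)) = \<pi> (y * \<epsilon>\<^sub>t g)" for y
    using Delta_eps_t[OF bilinear_pi_pi_antipode[of y]]
    by (simp add: mult.assoc[symmetric] sum_Delta_unit_mult_pi_pi_antipode)
  have "\<pi> h * \<pi> (\<epsilon>\<^sub>t g) = \<pi> h * (\<Sum>(a,b)\<leftarrow>D (\<epsilon>\<^sub>t g). \<pi> a * \<pi> (S b))"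
    using Delta_eps_t_pi[of 1] by simp
  also have "\<dots> = \<pi> (h * \<epsilon>\<^sub>t g)"
    by (simp add: PR2 Delta_eps_t_pi)
  finally show ?thesis .
qed

end

theorem proposition3p4:
  fixes sc :: "'k::field \<Rightarrow> 'h::ring_1 \<Rightarrow> 'h"
    and D :: "'h \<Rightarrow> ('h \<times> 'h) list" and eps :: "'h \<Rightarrow> 'k" and S :: "'h \<Rightarrow> 'h"
    and scA :: "'k \<Rightarrow> 'a::ring_1 \<Rightarrow> 'a" and \<pi> :: "'h \<Rightarrow> 'a"
  assumes "weak_hopf_algebra sc D eps S"
    and "k_algebra scA"
    and "partial_rep sc D S scA \<pi>"
    and "w \<in> range (eps_s sc D eps)"
    and "z \<in> range (eps_t sc D eps)"
  shows "\<forall>h. \<pi> w * \<pi> h = \<pi> (w * h)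
           \<and> \<pi> h * \<pi> z = \<pi> (h * z)
           \<and> \<pi> z * \<pi> h = \<pi> (z * h)
           \<and> \<pi> h * \<pi> w = \<pi> (h * w)"
proof -
  interpret weak_hopf_partial_rep sc D eps S scA \<pi>
    using assms(1-3) by unfold_locales
  obtain g where w: "w = \<epsilon>\<^sub>s g" using assms(4) by blast
  obtain g' where z: "z = \<epsilon>\<^sub>t g'" using assms(5) by blast
  show ?thesis
    by (simp add: w z pi_eps_s_mult pi_mult_eps_t pi_eps_t_mult pi_mult_eps_s)
qed

end
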